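(* Under the standing assumptions, for $0\le i\le d$ we have, as subspaces of $V$: (i) $E_iV+E_{i+1}V+\cdots+E_dV=U_i+U_{i+1}+\cdots+U_d$; (ii) $E^*_0V+E^*_1V+\cdots+E^*_iV=U_0+U_1+\cdots+U_i$.
   Context: Let $\mathbb F$ be an algebraically closed field, $d\ge0$, and $q,a,b,c,a^*,b^*,c^*\in\mathbb F$ with $q,b,c,b^*,c^*$ nonzero and $q^2\ne\pm1$. Put $\theta_i=a+bq^{2i-d}+cq^{d-2i}$ and $\theta^*_i=a^*+b^*q^{2i-d}+c^*q^{d-2i}$ ($0\le i\le d$), and assume $\theta_0,\dots,\theta_d$ are mutually distinct and $\theta^*_0,\dots,\theta^*_d$ are mutually distinct (this forces $q^{2i}\ne1$ for $1\le i\le d$). $U_q(\widehat{\mathfrak{sl}}_2)$ is the associative unital $\mathbb F$-algebra with generators $e_i^{\pm},K_i^{\pm1}$ ($i\in\{0,1\}$) and relations $K_iK_i^{-1}=K_i^{-1}K_i=1$, $K_0K_1=K_1K_0$, $K_ie_i^{\pm}K_i^{-1}=q^{\pm2}e_i^{\pm}$, $K_ie_j^{\pm}K_i^{-1}=q^{\mp2}e_j^{\pm}$ ($i\ne j$), $e_i^+e_i^--e_i^-e_i^+=(K_i-K_i^{-1})/(q-q^{-1})$, $e_0^{\pm}e_1^{\mp}=e_1^{\mp}e_0^{\pm}$, and the $q$-Serre relations $(e_i^\pm)^3e_j^\pm-[3]_q(e_i^\pm)^2e_j^\pm e_i^\pm+[3]_qe_i^\pm e_j^\pm(e_i^\pm)^2-e_j^\pm(e_i^\pm)^3=0$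 ($i\ne j$), where $[3]_q=q^2+1+q^{-2}$. Tensor products of modules are formed via $e_i^+(v\otimes w)=e_i^+v\otimes K_iw+v\otimes e_i^+w$, $e_i^-(v\otimes w)=e_i^-v\otimes w+K_i^{-1}v\otimes e_i^-w$, $K_i(v\otimes w)=K_iv\otimes K_iw$. For nonzero $\alpha\in\mathbb F$, $V(\alpha)$ is the module with basis $x,y$ and $K_1x=qx$, $K_1y=q^{-1}y$, $e_1^-x=y$, $e_1^-y=0$, $e_1^+x=0$, $e_1^+y=x$, $K_0x=q^{-1}x$, $K_0y=qy$, $e_0^-x=0$, $e_0^-y=q\alpha^{-1}x$, $e_0^+x=q^{-1}\alpha y$, $e_0^+y=0$. $V=V(\alpha_1)\otimes\cdots\otimes V(\alpha_d)$ with nonzero $\alpha_i\in\mathbb F$ (for $d=0$, the trivial module where each $e_i^\pm$ acts as $0$ and each $K_i^{\pm1}$ as $1$). For $0\le i\le d$, $U_i\subseteq V$ is the span of the basis vectors $v_1\otimes\cdots\otimes v_d$ ($v_k\in\{x,y\}$) with exactly $i$ factors equal to $y$. Fix $u,v,u^*,v^*\in\mathbb F$ with $uv^*=-bb^*q^{-1}(q-q^{-1})^2$, $vu^*=-cc^*q^{-1}(q-q^{-1})^2$; set $R=ue_0^++ve_1^-K_1$, $L=u^*e_1^++v^*e_0^-K_0$, $A=a1+bK_0+cK_1+R$, $A^*=a^*1+b^*K_0+c^*K_1+L$, and $E_i=\prod_{0\le j\le d,\,j\ne i}(A-\theta_j1)/(\theta_i-\theta_j)$, $E^*_i=\prod_{0\le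 j\le d,\,j\ne i}(A^*-\theta^*_j1)/(\theta^*_i-\theta^*_j)$ in $U_q(\widehat{\mathfrak{sl}}_2)$. *)

theory Defs
  imports Main "HOL-Computational_Algebra.Polynomial"
begin

definition alg_closed :: "'a::field itself \<Rightarrow> bool" where
  "alg_closed _ \<longleftrightarrow> (\<forall>p::'a poly. degree p > 0 \<longrightarrow> (\<exists>x. poly p x = 0))"

text \<open>Vectors of V = V(alpha_1) ox ... ox V(alpha_d): coefficient functions on the
  standard basis v_1 ox ... ox v_d, encoded as a bool list of length d
  (False = x, True = y).  Matrices: M t s = coefficient of basis vector t in the
  image of basis vector s.\<close>

definition Vsp :: "nat \<Rightarrow> (bool list \<Rightarrow> 'a::field) set" where
  "Vsp n = {w. \<forall>s. length s \<noteq> n \<longrightarrow> w s = 0}"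

definition act :: "nat \<Rightarrow> (bool list \<Rightarrow> bool list \<Rightarrow> 'a::field) \<Rightarrow> (bool list \<Rightarrow> 'a) \<Rightarrow> (bool list \<Rightarrow> 'a)" where
  "act n M w = (\<lambda>t. if length t = n then (\<Sum>s\<in>{s. length s = n}. M t s * w s) else 0)"

definition Kval :: "'a::field \<Rightarrow> nat \<Rightarrow> bool \<Rightarrow> 'a" where
  "Kval q i bt = (if i = 1 then (if bt then inverse q else q)
                  else (if bt then q else inverse q))"

text \<open>e_i^+ on V(alpha): e_1^+ y = x, e_0^+ x = q^{-1} alpha y (target, source).\<close>
definition ep1 :: "'a::field \<Rightarrow> nat \<Rightarrow> 'a \<Rightarrow> bool \<Rightarrow> bool \<Rightarrow> 'a" where
  "ep1 q i al tb sb = (if i = 1 then (if \<not> tb \<and> sb then 1 else 0)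
                       else (if tb \<and> \<not> sb then al / q else 0))"

text \<open>e_i^- on V(alpha): e_1^- x = y, e_0^- y = q alpha^{-1} x.\<close>
definition em1 :: "'a::field \<Rightarrow> nat \<Rightarrow> 'a \<Rightarrow> bool \<Rightarrow> bool \<Rightarrow> 'a" where
  "em1 q i al tb sb = (if i = 1 then (if tb \<and> \<not> sb then 1 else 0)
                       else (if \<not> tb \<and> sb then q / al else 0))"

text \<open>Matrices on V(alpha_1) ox (V(alpha_2) ox ... ), via the coproduct
  Delta(K) = K ox K, Delta(e^+) = e^+ ox K + 1 ox e^+, Delta(e^-) = e^- ox 1 + K^{-1} ox e^-.\<close>
fun tId :: "'a::field list \<Rightarrow> bool list \<Rightarrow> bool list \<Rightarrow> 'a" where
  "tId as t s = (if t = s \<and> length s = length as then 1 else 0)"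

fun tK :: "'a::field \<Rightarrow> nat \<Rightarrow> 'a list \<Rightarrow> bool list \<Rightarrow> bool list \<Rightarrow> 'a" where
  "tK q i [] [] [] = 1"
| "tK q i (al # as) (tb # t) (sb # s) = (if tb = sb then Kval q i tb * tK q i as t s else 0)"
| "tK q i _ _ _ = 0"

fun tEp :: "'a::field \<Rightarrow> nat \<Rightarrow> 'a list \<Rightarrow> bool list \<Rightarrow> bool list \<Rightarrow> 'a" where
  "tEp q i [] [] [] = 0"
| "tEp q i (al # as) (tb # t) (sb # s) =
     ep1 q i al tb sb * tK q i as t s + (if tb = sb then tEp q i as t s else 0)"
| "tEp q i _ _ _ = 0"

fun tEm :: "'a::field \<Rightarrow> nat \<Rightarrow> 'a list \<Rightarrow> bool list \<Rightarrow> bool list \<Rightarrow> 'a" where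
  "tEm q i [] [] [] = 0"
| "tEm q i (al # as) (tb # t) (sb # s) =
     em1 q i al tb sb * tId as t s + (if tb = sb then inverse (Kval q i tb) * tEm q i as t s else 0)"
| "tEm q i _ _ _ = 0"

definition K_op where "K_op q i as = act (length as) (tK q i as)"
definition ep_op where "ep_op q i as = act (length as) (tEp q i as)"
definition em_op where "em_op q i as = act (length as) (tEm q i as)"

definition A_op :: "'a::field \<Rightarrow> 'a list \<Rightarrow> 'a \<Rightarrow> 'a \<Rightarrow> 'a \<Rightarrow> 'a \<Rightarrow> 'a \<Rightarrow> (bool list \<Rightarrow> 'a) \<Rightarrow> (bool list \<Rightarrow> 'a)" where
  "A_op q as a b c u v w = (\<lambda>t. a * w t + b * K_op q 0 as w t + c * K_op q 1 as w t
      + u * ep_op q 0 as w t + v * em_op q 1 as (K_op q 1 as w) t)"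

definition As_op :: "'a::field \<Rightarrow> 'a list \<Rightarrow> 'a \<Rightarrow> 'a \<Rightarrow> 'a \<Rightarrow> 'a \<Rightarrow> 'a \<Rightarrow> (bool list \<Rightarrow> 'a) \<Rightarrow> (bool list \<Rightarrow> 'a)" where
  "As_op q as a b c u v w = (\<lambda>t. a * w t + b * K_op q 0 as w t + c * K_op q 1 as w t
      + u * ep_op q 1 as w t + v * em_op q 0 as (K_op q 0 as w) t)"

definition theta :: "'a::field \<Rightarrow> nat \<Rightarrow> 'a \<Rightarrow> 'a \<Rightarrow> 'a \<Rightarrow> nat \<Rightarrow> 'a" where
  "theta q d a b c i = a + b * q powi (2 * int i - int d) + c * q powi (int d - 2 * int i)"

text \<open>Primitive idempotent E_i = prod_{j \<noteq> i} (X - th_j)/(th_i - th_j) evaluated at the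
  operator X on V (the product is taken in increasing order of j).\<close>
definition idem_op :: "((bool list \<Rightarrow> 'a::field) \<Rightarrow> (bool list \<Rightarrow> 'a)) \<Rightarrow> (nat \<Rightarrow> 'a) \<Rightarrow> nat \<Rightarrow> nat
     \<Rightarrow> (bool list \<Rightarrow> 'a) \<Rightarrow> (bool list \<Rightarrow> 'a)" where
  "idem_op X th d i = foldr (\<lambda>j f. (\<lambda>w. (\<lambda>t. (X w t - th j * w t) / (th i - th j))) \<circ> f)
                        (filter (\<lambda>j. j \<noteq> i) [0..<Suc d]) id"

definition Usp :: "nat \<Rightarrow> nat \<Rightarrow> (bool list \<Rightarrow> 'a::field) set" where
  "Usp n k = {w \<in> Vsp n. \<forall>s. w s \<noteq> 0 \<longrightarrow> count_list s True = k}"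

definition ssum :: "(nat \<Rightarrow> (bool list \<Rightarrow> 'a::field) set) \<Rightarrow> nat set \<Rightarrow> (bool list \<Rightarrow> 'a) set" where
  "ssum W I = {(\<lambda>t. \<Sum>k\<in>I. x k t) | x. \<forall>k\<in>I. x k \<in> W k}"

end

theory Submission
  imports Defs "HOL-Library.Multiset"
begin

(* Both statements are instances of one abstract fact about a linear
   operator X with pairwise distinct scalars th_0, ..., th_d.  Suppose there is a flag
   V = W_0 \<supseteq> W_1 \<supseteq> ... \<supseteq> W_(d+1) = 0 of subspaces and a permutation sigma of
   {0..d} such that (X - th_(sigma m)) W_m \<subseteq> W_(m+1).  Then
     W_i = E_(sigma i) V + ... + E_(sigma d) V,
   where E_k is the idempotent prod_(j \<noteq> k) (X - th_j)/(th_k - th_j).  Inclusion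
   "\<supseteq>": ordering the factors of E_(sigma m) as sigma 0, sigma 1, ... pushes V down
   into W_m.  Inclusion "\<subseteq>": for w \<in> W_i, E_(sigma i) w \<equiv> w modulo W_(i+1), and we
   conclude by downward induction on i.

   It then shows
   that A = (diagonal part acting on U_k by theta_k) + (part raising the number of
   y-factors), and that A^* = (the same kind of diagonal part) + (part lowering that
   number).  Hence A is triangular for the flag W_m = U_m + ... + U_d with sigma = id,
   and A^* for the flag W_m = U_0 + ... + U_(d-m) with sigma m = d - m; both flags are
   instances of level_space below.  Only d = length alphas, q \<noteq> 0, the distinctness of
   the theta_i (resp. theta^*_i) and i \<le> d are needed for the conclusion. *)

definition factor :: "((bool list \<Rightarrow> 'a::field) \<Rightarrow> (bool list \<Rightarrow> 'a)) \<Rightarrow> (nat \<Rightarrow> 'a) \<Rightarrow> nat \<Rightarrow> nat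
    \<Rightarrow> (bool list \<Rightarrow> 'a) \<Rightarrow> (bool list \<Rightarrow> 'a)" where
  "factor X th k j = (\<lambda>w t. (X w t - th j * w t) / (th k - th j))"

definition factor_prod :: "((bool list \<Rightarrow> 'a::field) \<Rightarrow> (bool list \<Rightarrow> 'a)) \<Rightarrow> (nat \<Rightarrow> 'a) \<Rightarrow> nat
    \<Rightarrow> nat list \<Rightarrow> (bool list \<Rightarrow> 'a) \<Rightarrow> (bool list \<Rightarrow> 'a)" where
  "factor_prod X th k L = foldr (\<lambda>j f. factor X th k j \<circ> f) L id"

lemma idem_op_factor_prod:
  "idem_op X th d k = factor_prod X th k (filter (\<lambda>j. j \<noteq> k) [0..<Suc d])"
  unfolding idem_op_def factor_prod_def factor_def by simp

lemma factor_prod_Nil [simp]: "factor_prod X th k [] = id"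
  and factor_prod_Cons [simp]: "factor_prod X th k (j # L) = factor X th k j \<circ> factor_prod X th k L"
  unfolding factor_prod_def by simp_all

lemma ssum_empty: "ssum S {} = {\<lambda>t. 0}"
  unfolding ssum_def by simp

lemma ssum_insert:
  assumes "finite I" "k \<notin> I" "y \<in> S k" "z \<in> ssum S I"
  shows "(\<lambda>t. y t + z t) \<in> ssum S (insert k I)"
proof -
  obtain x where z: "z = (\<lambda>t. \<Sum>j\<in>I. x j t)" and x: "\<forall>j\<in>I. x j \<in> S j"
    using assms(4) unfolding ssum_def by blast
  have "(\<Sum>j\<in>I. (x(k := y)) j t) = (\<Sum>j\<in>I. x j t)" for t
    using assms(2) by (intro sum.cong) auto
  then have "(\<lambda>t. y t + z t) = (\<lambda>t. \<Sum>j\<in>insert k I. (x(k := y)) j t)"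
    using assms(1,2) by (simp add: z)
  moreover have "\<forall>j\<in>insert k I. (x(k := y)) j \<in> S j"
    using x assms(3) by auto
  ultimately show ?thesis
    unfolding ssum_def by blast
qed

locale triangular_flag =
  fixes X :: "(bool list \<Rightarrow> 'a::field) \<Rightarrow> (bool list \<Rightarrow> 'a)" and th :: "nat \<Rightarrow> 'a" and d :: nat
    and W :: "nat \<Rightarrow> (bool list \<Rightarrow> 'a) set" and \<sigma> :: "nat \<Rightarrow> nat"
  assumes linear: "\<And>f h \<alpha> \<beta>. X (\<lambda>t. \<alpha> * f t + \<beta> * h t) = (\<lambda>t. \<alpha> * X f t + \<beta> * X h t)"
    and subspace: "\<And>m f h \<alpha> \<beta>. f \<in> W m \<Longrightarrow> h \<in> W m \<Longrightarrow> (\<lambda>t. \<alpha> * f t + \<beta> * h t) \<in> W m"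
    and zero_mem: "\<And>m. (\<lambda>t. 0) \<in> W m"
    and antimono: "\<And>m m'. m \<le> m' \<Longrightarrow> W m' \<subseteq> W m"
    and flag_top: "W (Suc d) \<subseteq> {\<lambda>t. 0}"
    and triangular: "\<And>m w. m \<le> d \<Longrightarrow> w \<in> W m \<Longrightarrow> (\<lambda>t. X w t - th (\<sigma> m) * w t) \<in> W (Suc m)"
    and perm: "bij_betw \<sigma> {0..d} {0..d}"
    and distinct_eigs: "inj_on th {0..d}"
begin

lemma W_add: "f \<in> W m \<Longrightarrow> h \<in> W m \<Longrightarrow> (\<lambda>t. f t + h t) \<in> W m"
  using subspace[of f m h 1 1] by simp

lemma W_smult: "f \<in> W m \<Longrightarrow> (\<lambda>t. \<alpha> * f t) \<in> W m"
  using subspace[of f m f \<alpha> 0] by simp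

lemma W_Suc: "f \<in> W (Suc m) \<Longrightarrow> f \<in> W m"
  using antimono[of m "Suc m"] by auto

lemma W_sum: "finite I \<Longrightarrow> \<forall>k\<in>I. x k \<in> W m \<Longrightarrow> (\<lambda>t. \<Sum>k\<in>I. x k t) \<in> W m"
  by (induction I rule: finite_induct) (simp_all add: zero_mem W_add)

lemma \<sigma>_le: "m \<le> d \<Longrightarrow> \<sigma> m \<le> d"
  using perm by (auto simp: bij_betw_def)

lemma \<sigma>_inj: "m \<le> d \<Longrightarrow> n \<le> d \<Longrightarrow> \<sigma> m = \<sigma> n \<Longrightarrow> m = n"
  using perm by (auto simp: bij_betw_def inj_on_def)

lemma eig_diff_nonzero: "j \<le> d \<Longrightarrow> k \<le> d \<Longrightarrow> j \<noteq> k \<Longrightarrow> th k - th j \<noteq> 0"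
  using distinct_eigs by (auto simp: inj_on_def)

(* Each factor is an affine combination of X and the identity, so by linearity of X
   any two factors commute; hence the order of the factors in E_k is irrelevant. *)
lemma factors_commute: "factor X th k j \<circ> factor X th k l = factor X th k l \<circ> factor X th k j"
proof -
  have affine: "factor X th k l w = (\<lambda>t. inverse (th k - th l) * X w t
                  + (- th l * inverse (th k - th l)) * w t)" for l w
    unfolding factor_def by (auto simp: divide_inverse algebra_simps)
  show ?thesis
    by (rule ext, simp only: comp_def affine linear) (simp add: algebra_simps)
qed

lemma factor_prod_perm:
  assumes "mset L1 = mset L2"
  shows "factor_prod X th k L1 = factor_prod X th k L2"
proof -
  let ?f = "\<lambda>j g. factor X th k j \<circ> g"
  have "?f x \<circ> ?f y = ?f y \<circ> ?f x" for x y
    by (rule ext) (simp only: comp_apply comp_assoc[symmetric] factors_commute[of k x y])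
  then have "fold ?f (rev L1) = fold ?f (rev L2)"
    using assms by (intro fold_multiset_equiv) simp_all
  then have "fold ?f (rev L1) id = fold ?f (rev L2) id"
    by (rule fun_cong)
  then show ?thesis
    unfolding factor_prod_def foldr_conv_fold .
qed

lemma factor_keeps:
  assumes "m \<le> d" "w \<in> W m"
  shows "factor X th k j w \<in> W m"
proof -
  have "factor X th k j w = (\<lambda>t. inverse (th k - th j) * (X w t - th (\<sigma> m) * w t)
          + (inverse (th k - th j) * (th (\<sigma> m) - th j)) * w t)"
    unfolding factor_def by (auto simp: divide_inverse algebra_simps)
  moreover have "(\<lambda>t. X w t - th (\<sigma> m) * w t) \<in> W m"
    using triangular[OF assms] W_Suc by blast
  ultimately show ?thesis
    using subspace assms(2) by simp
qed

lemma factor_lowers: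
  assumes "m \<le> d" "w \<in> W m"
  shows "factor X th k (\<sigma> m) w \<in> W (Suc m)"
proof -
  have "factor X th k (\<sigma> m) w = (\<lambda>t. inverse (th k - th (\<sigma> m)) * (X w t - th (\<sigma> m) * w t))"
    unfolding factor_def by (auto simp: divide_inverse algebra_simps)
  then show ?thesis
    using triangular[OF assms] W_smult by simp
qed

lemma factor_congruent:
  assumes "i \<le> d" "w \<in> W i" "j \<le> d" "j \<noteq> \<sigma> i"
  shows "(\<lambda>t. factor X th (\<sigma> i) j w t - w t) \<in> W (Suc i)"
proof -
  have "th (\<sigma> i) - th j \<noteq> 0"
    using eig_diff_nonzero \<sigma>_le assms by auto
  then have "(\<lambda>t. factor X th (\<sigma> i) j w t - w t)
               = (\<lambda>t. inverse (th (\<sigma> i) - th j) * (X w t - th (\<sigma> i) * w t))"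
    unfolding factor_def by (auto simp: field_simps)
  then show ?thesis
    using W_smult triangular assms by simp
qed

lemma factor_prod_congruent:
  assumes "i \<le> d" "w \<in> W i" "set L \<subseteq> {0..d}" "\<sigma> i \<notin> set L"
  shows "factor_prod X th (\<sigma> i) L w \<in> W i
       \<and> (\<lambda>t. factor_prod X th (\<sigma> i) L w t - w t) \<in> W (Suc i)"
  using assms(3,4)
proof (induction L)
  case Nil
  then show ?case using assms(2) by (simp add: zero_mem)
next
  case (Cons j L)
  let ?v = "factor_prod X th (\<sigma> i) L w"
  have v: "?v \<in> W i" "(\<lambda>t. ?v t - w t) \<in> W (Suc i)"
    using Cons by auto
  have step: "(\<lambda>t. factor X th (\<sigma> i) j ?v t - ?v t) \<in> W (Suc i)"
    using factor_congruent[OF assms(1) v(1)] Cons.prems by auto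
  have "(\<lambda>t. ?v t + (factor X th (\<sigma> i) j ?v t - ?v t)) \<in> W i"
    using W_add[OF v(1) W_Suc[OF step]] .
  moreover have "(\<lambda>t. (factor X th (\<sigma> i) j ?v t - ?v t) + (?v t - w t)) \<in> W (Suc i)"
    using W_add[OF step v(2)] .
  ultimately show ?case by simp
qed

(* Applying the factors in the order sigma 0, sigma 1, ... pushes W_0 down the flag
   until level k is reached, after which the remaining factors keep W_k. *)
lemma factor_prod_descends:
  assumes "k \<le> d" "v \<in> W 0" "n \<le> Suc d"
  shows "factor_prod X th (\<sigma> k) (filter (\<lambda>j. j \<noteq> \<sigma> k) (rev (map \<sigma> [0..<n]))) v \<in> W (min n k)"
  using assms(3)
proof (induction n)
  case 0
  then show ?case using assms(2) by simp
next
  case (Suc n)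
  let ?F = "factor_prod X th (\<sigma> k) (filter (\<lambda>j. j \<noteq> \<sigma> k) (rev (map \<sigma> [0..<n]))) v"
  have IH: "?F \<in> W (min n k)" and nd: "n \<le> d"
    using Suc by simp_all
  show ?case
  proof (cases "n = k")
    case True
    then show ?thesis using IH by simp
  next
    case False
    then have "\<sigma> n \<noteq> \<sigma> k"
      using \<sigma>_inj nd assms(1) by blast
    then have eq: "factor_prod X th (\<sigma> k) (filter (\<lambda>j. j \<noteq> \<sigma> k) (rev (map \<sigma> [0..<Suc n]))) v
                     = factor X th (\<sigma> k) (\<sigma> n) ?F"
      by simp
    show ?thesis
    proof (cases "n < k")
      case True
      then have F: "?F \<in> W n" and m: "min (Suc n) k = Suc n"
        using IH by (simp_all add: min_def)
      show ?thesis
        unfolding eq m by (rule factor_lowers[OF nd F])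
    next
      case False
      then have F: "?F \<in> W k" and m: "min (Suc n) k = k"
        using IH \<open>n \<noteq> k\<close> by (simp_all add: min_def)
      show ?thesis
        unfolding eq m by (rule factor_keeps[OF assms(1) F])
    qed
  qed
qed

lemma idem_in_flag:
  assumes "k \<le> d" "v \<in> W 0"
  shows "idem_op X th d (\<sigma> k) v \<in> W k"
proof -
  have range: "set [0..<Suc d] = {0..d}"
    by (simp only: set_upt atLeastLessThanSuc_atLeastAtMost)
  have inj: "inj_on \<sigma> {0..d}" and onto: "\<sigma> ` {0..d} = {0..d}"
    using perm by (simp_all add: bij_betw_def)
  have "distinct (map \<sigma> [0..<Suc d])" "set (map \<sigma> [0..<Suc d]) = set [0..<Suc d]"
    by (simp_all only: distinct_map distinct_upt set_map range inj onto simp_thms)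
  then have "mset (map \<sigma> [0..<Suc d]) = mset [0..<Suc d]"
    by (simp only: set_eq_iff_mset_eq_distinct[symmetric] distinct_upt)
  then have "mset (filter (\<lambda>j. j \<noteq> \<sigma> k) [0..<Suc d])
               = mset (filter (\<lambda>j. j \<noteq> \<sigma> k) (rev (map \<sigma> [0..<Suc d])))"
    by (simp only: mset_filter mset_rev)
  then have "idem_op X th d (\<sigma> k)
               = factor_prod X th (\<sigma> k) (filter (\<lambda>j. j \<noteq> \<sigma> k) (rev (map \<sigma> [0..<Suc d])))"
    unfolding idem_op_factor_prod by (rule factor_prod_perm)
  then show ?thesis
    using factor_prod_descends[OF assms, of "Suc d"] assms(1) by simp
qed

lemma idem_congruent:
  assumes "i \<le> d" "w \<in> W i"
  shows "(\<lambda>t. w t - idem_op X th d (\<sigma> i) w t) \<in> W (Suc i)"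
proof -
  let ?L = "filter (\<lambda>j. j \<noteq> \<sigma> i) [0..<Suc d]"
  have "set ?L \<subseteq> {0..d}" "\<sigma> i \<notin> set ?L"
    by auto
  then have "(\<lambda>t. factor_prod X th (\<sigma> i) ?L w t - w t) \<in> W (Suc i)"
    using factor_prod_congruent[OF assms] by blast
  from W_smult[OF this, of "-1"] show ?thesis
    by (simp add: idem_op_factor_prod del: upt_Suc)
qed

lemma idem_sum_subset:
  "ssum (\<lambda>k. idem_op X th d k ` W 0) (\<sigma> ` {i..d}) \<subseteq> W i"
proof
  fix z assume "z \<in> ssum (\<lambda>k. idem_op X th d k ` W 0) (\<sigma> ` {i..d})"
  then obtain x where z: "z = (\<lambda>t. \<Sum>k\<in>\<sigma> ` {i..d}. x k t)"
    and x: "\<forall>k\<in>\<sigma> ` {i..d}. x k \<in> idem_op X th d k ` W 0"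
    unfolding ssum_def by blast
  have "x (\<sigma> m) \<in> W i" if "m \<in> {i..d}" for m
  proof -
    have "\<sigma> m \<in> \<sigma> ` {i..d}"
      using that by (rule imageI)
    then obtain v where v: "v \<in> W 0" and xv: "x (\<sigma> m) = idem_op X th d (\<sigma> m) v"
      using x by blast
    have "x (\<sigma> m) \<in> W m"
      unfolding xv using that by (intro idem_in_flag v) simp
    then show ?thesis
      using antimono[of i m] that by auto
  qed
  then show "z \<in> W i"
    unfolding z by (intro W_sum) auto
qed

lemma flag_subset_idem_sum:
  "i \<le> Suc d \<Longrightarrow> W i \<subseteq> ssum (\<lambda>k. idem_op X th d k ` W 0) (\<sigma> ` {i..d})"
proof (induction i rule: inc_induct)
  case base
  then show ?case using flag_top by (simp add: ssum_empty)
next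
  case (step i)
  show ?case
  proof
    fix w assume w: "w \<in> W i"
    let ?e = "idem_op X th d (\<sigma> i) w"
    have id: "i \<le> d" using step by simp
    have "?e \<in> idem_op X th d (\<sigma> i) ` W 0"
      using w antimono[of 0 i] by auto
    moreover have "(\<lambda>t. w t - ?e t) \<in> ssum (\<lambda>k. idem_op X th d k ` W 0) (\<sigma> ` {Suc i..d})"
      using step.IH idem_congruent[OF id w] by blast
    moreover have "\<sigma> i \<notin> \<sigma> ` {Suc i..d}"
      using \<sigma>_inj id by fastforce
    ultimately have "(\<lambda>t. ?e t + (w t - ?e t))
                       \<in> ssum (\<lambda>k. idem_op X th d k ` W 0) (insert (\<sigma> i) (\<sigma> ` {Suc i..d}))"
      by (intro ssum_insert) auto
    moreover have "insert (\<sigma> i) (\<sigma> ` {Suc i..d}) = \<sigma> ` {i..d}"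
      using id by (simp only: Icc_eq_insert_lb_nat[of i d] image_insert)
    ultimately show "w \<in> ssum (\<lambda>k. idem_op X th d k ` W 0) (\<sigma> ` {i..d})"
      by simp
  qed
qed

theorem flag_eq_idem_sum:
  "i \<le> Suc d \<Longrightarrow> ssum (\<lambda>k. idem_op X th d k ` W 0) (\<sigma> ` {i..d}) = W i"
  using idem_sum_subset flag_subset_idem_sum by blast

end

(* With lvl = number of y-factors this is U_m + ... + U_d; with
   lvl = d - number of y-factors it is U_0 + ... + U_(d-m). *)
definition level_space :: "nat \<Rightarrow> (bool list \<Rightarrow> nat) \<Rightarrow> nat \<Rightarrow> (bool list \<Rightarrow> 'a::field) set" where
  "level_space d lvl m = {w \<in> Vsp d. \<forall>s. w s \<noteq> 0 \<longrightarrow> m \<le> lvl s}"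

lemma level_space_lincomb:
  "f \<in> level_space d lvl m \<Longrightarrow> h \<in> level_space d lvl m \<Longrightarrow> (\<lambda>t. \<alpha> * f t + \<beta> * h t) \<in> level_space d lvl m"
  unfolding level_space_def Vsp_def by (auto, metis add.right_neutral mult_zero_right)

lemma level_space_zero: "(\<lambda>t. 0) \<in> level_space d lvl m"
  by (simp add: level_space_def Vsp_def)

lemma level_space_antimono: "m \<le> m' \<Longrightarrow> level_space d lvl m' \<subseteq> level_space d lvl m"
  by (auto simp: level_space_def)

lemma level_space_0: "level_space d lvl 0 = Vsp d"
  by (simp add: level_space_def)

lemma level_space_top:
  assumes "\<And>s. length s = d \<Longrightarrow> lvl s \<le> d"
  shows "level_space d lvl (Suc d) \<subseteq> {\<lambda>t. 0}"
proof
  fix w :: "bool list \<Rightarrow> 'a" assume w: "w \<in> level_space d lvl (Suc d)"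
  have "w s = 0" for s
    using w assms[of s] by (force simp: level_space_def Vsp_def)
  then show "w \<in> {\<lambda>t. 0}" by auto
qed

lemma count_True_le: "w \<in> Vsp d \<Longrightarrow> w s \<noteq> 0 \<Longrightarrow> count_list s True \<le> d"
  using count_le_length[of s True] by (auto simp: Vsp_def)

lemma ssum_Usp:
  assumes "finite I"
  shows "ssum (Usp d) I = {w \<in> Vsp d. \<forall>s. w s \<noteq> 0 \<longrightarrow> count_list s True \<in> I}"
proof
  show "ssum (Usp d) I \<subseteq> {w \<in> Vsp d. \<forall>s. w s \<noteq> 0 \<longrightarrow> count_list s True \<in> I}"
  proof
    fix z assume "z \<in> ssum (Usp d) I"
    then obtain x where z: "z = (\<lambda>t. \<Sum>k\<in>I. x k t)" and x: "\<forall>k\<in>I. x k \<in> Usp d k"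
      unfolding ssum_def by blast
    have "count_list s True \<in> I" if "z s \<noteq> 0" for s
    proof -
      obtain k where "k \<in> I" "x k s \<noteq> 0"
        using \<open>z s \<noteq> 0\<close> unfolding z by (meson sum.not_neutral_contains_not_neutral)
      then show ?thesis using x by (auto simp: Usp_def)
    qed
    moreover have "z \<in> Vsp d"
      using x by (auto simp: z Usp_def Vsp_def)
    ultimately show "z \<in> {w \<in> Vsp d. \<forall>s. w s \<noteq> 0 \<longrightarrow> count_list s True \<in> I}" by blast
  qed
next
  show "{w \<in> Vsp d. \<forall>s. w s \<noteq> 0 \<longrightarrow> count_list s True \<in> I} \<subseteq> ssum (Usp d) I"
  proof
    fix w assume w: "w \<in> {w \<in> Vsp d. \<forall>s. w s \<noteq> 0 \<longrightarrow> count_list s True \<in> I}"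
    let ?x = "\<lambda>k t. if count_list t True = k then w t else 0"
    have "w = (\<lambda>t. \<Sum>k\<in>I. ?x k t)"
      using w assms by (auto simp: sum.delta fun_eq_iff)
    moreover have "\<forall>k\<in>I. ?x k \<in> Usp d k"
      using w by (auto simp: Usp_def Vsp_def)
    ultimately show "w \<in> ssum (Usp d) I"
      unfolding ssum_def by (intro CollectI exI[of _ ?x] conjI)
  qed
qed

lemma ssum_Usp_upper: "ssum (Usp d) {i..d} = level_space d (\<lambda>s. count_list s True) i"
  unfolding ssum_Usp[OF finite_atLeastAtMost] using count_True_le by (auto simp: level_space_def)

lemma ssum_Usp_lower:
  assumes "i \<le> d"
  shows "ssum (Usp d) {0..i} = level_space d (\<lambda>s. d - count_list s True) (d - i)"
proof -
  have "count_list s True \<in> {0..i} \<longleftrightarrow> d - i \<le> d - count_list s True"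
    if "w \<in> Vsp d" "w s \<noteq> 0" for w :: "bool list \<Rightarrow> 'a" and s
    using count_True_le[OF that] assms by auto
  then show ?thesis
    unfolding ssum_Usp[OF finite_atLeastAtMost] level_space_def by auto
qed

lemma tK_eq:
  "tK q i as t s = (if t = s \<and> length t = length as then prod_list (map (Kval q i) t) else 0)"
  by (induction q i as t s rule: tK.induct) auto

lemma K_op_eq:
  "K_op q i as w t = (if length t = length as then prod_list (map (Kval q i) t) * w t else 0)"
proof -
  have "(\<Sum>s | length s = length as. tK q i as t s * w s)
      = (\<Sum>s | length s = length as. if s = t then prod_list (map (Kval q i) t) * w t else 0)"
    by (rule sum.cong) (auto simp: tK_eq)
  moreover have "finite {s::bool list. length s = length as}"
    using finite_lists_length_eq[of "UNIV :: bool set"] by simp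
  ultimately show ?thesis
    unfolding K_op_def act_def by simp
qed

lemma Kval_0_prod:
  "q \<noteq> 0 \<Longrightarrow> prod_list (map (Kval q 0) t) = q powi (2 * int (count_list t True) - int (length t))"
proof (induction t)
  case (Cons x t) then show ?case
    by (cases x) (auto simp: Kval_def power_int_add power_int_diff field_simps)
qed simp

lemma Kval_1_prod:
  "q \<noteq> 0 \<Longrightarrow> prod_list (map (Kval q 1) t) = q powi (int (length t) - 2 * int (count_list t True))"
proof (induction t)
  case (Cons x t) then show ?case
    by (cases x) (auto simp: Kval_def power_int_add power_int_diff field_simps)
qed simp

lemma K_combination_diagonal:
  assumes "q \<noteq> 0" "w \<in> Vsp (length al)"
  shows "a * w t + b * K_op q 0 al w t + c * K_op q 1 al w t
           = theta q (length al) a b c (count_list t True) * w t"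
  using assms
  by (cases "length t = length al")
     (auto simp: K_op_eq Kval_0_prod Kval_1_prod[simplified] theta_def Vsp_def algebra_simps)

lemma tEp_count:
  "tEp q i as t s \<noteq> 0 \<Longrightarrow> (if i = 1 then count_list t True + 1 = count_list s True
                                    else count_list t True = count_list s True + 1)"
  by (induction q i as t s rule: tEp.induct) (auto simp: ep1_def tK_eq split: if_splits)

lemma tEm_count:
  "tEm q i as t s \<noteq> 0 \<Longrightarrow> (if i = 1 then count_list t True = count_list s True + 1
                                    else count_list t True + 1 = count_list s True)"
  by (induction q i as t s rule: tEm.induct) (auto simp: em1_def split: if_splits)

lemma act_linear:
  "act n M (\<lambda>t. \<alpha> * f t + \<beta> * h t) = (\<lambda>t. \<alpha> * act n M f t + \<beta> * act n M h t)"
  unfolding act_def by (auto simp: sum_distrib_left sum.distrib algebra_simps)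

lemma act_raises_level:
  assumes raise: "\<And>t s. length t = n \<Longrightarrow> length s = n \<Longrightarrow> M t s \<noteq> 0 \<Longrightarrow> Suc (lvl s) \<le> lvl t"
    and w: "w \<in> level_space n lvl m"
  shows "act n M w \<in> level_space n lvl (Suc m)"
  unfolding level_space_def Vsp_def
proof (intro CollectI conjI allI impI)
  fix t :: "bool list" assume "length t \<noteq> n"
  then show "act n M w t = 0" by (simp add: act_def)
next
  fix t assume nz: "act n M w t \<noteq> 0"
  then have t: "length t = n" by (auto simp: act_def split: if_splits)
  with nz obtain s where "s \<in> {s. length s = n}" "M t s * w s \<noteq> 0"
    unfolding act_def by (auto elim: sum.not_neutral_contains_not_neutral)
  then show "Suc m \<le> lvl t"
    using raise[OF t] w by (force simp: level_space_def)
qed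

lemma K_op_level: "w \<in> level_space (length as) lvl m \<Longrightarrow> K_op q i as w \<in> level_space (length as) lvl m"
  by (auto simp: level_space_def Vsp_def K_op_eq)

lemma level_step:
  assumes w: "w \<in> level_space d lvl m" and R: "R \<in> level_space d lvl (Suc m)"
    and decomp: "\<And>t. Y t = \<mu> t * w t + R t"
    and eigen: "\<And>t. length t = d \<Longrightarrow> lvl t = m \<Longrightarrow> \<mu> t = ev"
  shows "(\<lambda>t. Y t - ev * w t) \<in> level_space d lvl (Suc m)"
  unfolding level_space_def Vsp_def
proof (intro CollectI conjI allI impI)
  fix t :: "bool list" assume "length t \<noteq> d"
  then show "Y t - ev * w t = 0"
    using w R by (simp add: decomp level_space_def Vsp_def)
next
  fix t assume nz: "Y t - ev * w t \<noteq> 0"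
  show "Suc m \<le> lvl t"
  proof (cases "R t = 0")
    case True
    then have "w t \<noteq> 0" "\<mu> t \<noteq> ev"
      using nz by (auto simp: decomp algebra_simps)
    moreover have "length t = d" "m \<le> lvl t"
      using w \<open>w t \<noteq> 0\<close> by (auto simp: level_space_def Vsp_def)
    ultimately show ?thesis
      using eigen by force
  next
    case False
    then show ?thesis using R by (simp add: level_space_def)
  qed
qed

lemma reflect_bij: "bij_betw (\<lambda>m. d - m) {0..d} {0..d::nat}"
  by (rule bij_betw_byWitness[where f' = "\<lambda>m. d - m"]) auto

lemma reflect_image:
  assumes "i \<le> d"
  shows "(\<lambda>m. d - m) ` {d - i..d} = {0..i::nat}"
proof
  show "(\<lambda>m. d - m) ` {d - i..d} \<subseteq> {0..i}"
    using assms by auto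
  show "{0..i} \<subseteq> (\<lambda>m. d - m) ` {d - i..d}"
  proof
    fix x assume "x \<in> {0..i}"
    then have "d - x \<in> {d - i..d}" "x = d - (d - x)"
      using assms by auto
    then show "x \<in> (\<lambda>m. d - m) ` {d - i..d}"
      by (rule rev_image_eqI)
  qed
qed

lemma A_op_linear:
  "A_op q al a b c u v (\<lambda>t. \<alpha> * f t + \<beta> * h t)
     = (\<lambda>t. \<alpha> * A_op q al a b c u v f t + \<beta> * A_op q al a b c u v h t)"
  unfolding A_op_def K_op_def ep_op_def em_op_def act_linear by (rule ext) (simp add: algebra_simps)

lemma As_op_linear:
  "As_op q al a b c u v (\<lambda>t. \<alpha> * f t + \<beta> * h t)
     = (\<lambda>t. \<alpha> * As_op q al a b c u v f t + \<beta> * As_op q al a b c u v h t)"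
  unfolding As_op_def K_op_def ep_op_def em_op_def act_linear by (rule ext) (simp add: algebra_simps)

(* A - theta_m maps U_m + ... + U_d into U_(m+1) + ... + U_d: the part u e_0^+ +
   v e_1^- K_1 raises the number of y-factors. *)
lemma A_op_triangular:
  assumes d: "d = length al" and q: "q \<noteq> 0"
    and w: "w \<in> level_space d (\<lambda>s. count_list s True) m"
  shows "(\<lambda>t. A_op q al a b c u v w t - theta q d a b c m * w t)
           \<in> level_space d (\<lambda>s. count_list s True) (Suc m)"
proof -
  let ?R = "\<lambda>t. u * ep_op q 0 al w t + v * em_op q 1 al (K_op q 1 al w) t"
  have w': "w \<in> level_space (length al) (\<lambda>s. count_list s True) m"
    using w d by simp
  have "ep_op q 0 al w \<in> level_space d (\<lambda>s. count_list s True) (Suc m)"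
    unfolding ep_op_def d using tEp_count[of q 0 al] by (intro act_raises_level[OF _ w']) force
  moreover have "em_op q 1 al (K_op q 1 al w) \<in> level_space d (\<lambda>s. count_list s True) (Suc m)"
    unfolding em_op_def d using tEm_count[of q 1 al]
    by (intro act_raises_level[OF _ K_op_level[OF w']]) force
  ultimately have R: "?R \<in> level_space d (\<lambda>s. count_list s True) (Suc m)"
    by (rule level_space_lincomb)
  have "w \<in> Vsp (length al)"
    using w' by (simp add: level_space_def)
  then have "A_op q al a b c u v w t = theta q d a b c (count_list t True) * w t + ?R t" for t
    using K_combination_diagonal[OF q] d by (simp add: A_op_def algebra_simps)
  from level_step[OF w R this] show ?thesis
    by simp
qed

(* A^* - theta^*_(d-m) maps U_0 + ... + U_(d-m) into U_0 + ... + U_(d-m-1): the part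
   u^* e_1^+ + v^* e_0^- K_0 lowers the number of y-factors. *)
lemma As_op_triangular:
  assumes d: "d = length al" and q: "q \<noteq> 0"
    and w: "w \<in> level_space d (\<lambda>s. d - count_list s True) m"
  shows "(\<lambda>t. As_op q al a b c u v w t - theta q d a b c (d - m) * w t)
           \<in> level_space d (\<lambda>s. d - count_list s True) (Suc m)"
proof -
  let ?R = "\<lambda>t. u * ep_op q 1 al w t + v * em_op q 0 al (K_op q 0 al w) t"
  have w': "w \<in> level_space (length al) (\<lambda>s. length al - count_list s True) m"
    using w d by simp
  have raise: "Suc (length al - count_list s True) \<le> length al - count_list t True"
    if "length s = length al" "Suc (count_list t True) = count_list s True" for s t :: "bool list"
    using that count_le_length[of s True] by linarith
  have "ep_op q 1 al w \<in> level_space d (\<lambda>s. d - count_list s True) (Suc m)"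
    unfolding ep_op_def d using tEp_count[of q 1 al] raise
    by (intro act_raises_level[OF _ w']) force
  moreover have "em_op q 0 al (K_op q 0 al w) \<in> level_space d (\<lambda>s. d - count_list s True) (Suc m)"
    unfolding em_op_def d using tEm_count[of q 0 al] raise
    by (intro act_raises_level[OF _ K_op_level[OF w']]) force
  ultimately have R: "?R \<in> level_space d (\<lambda>s. d - count_list s True) (Suc m)"
    by (rule level_space_lincomb)
  have "w \<in> Vsp (length al)"
    using w' by (simp add: level_space_def)
  then have "As_op q al a b c u v w t = theta q d a b c (count_list t True) * w t + ?R t" for t
    using K_combination_diagonal[OF q] d by (simp add: As_op_def algebra_simps)
  moreover have "theta q d a b c (count_list t True) = theta q d a b c (d - m)"
    if "length t = d" "d - count_list t True = m" for t
    using that count_le_length[of t True] by (metis diff_diff_cancel)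
  ultimately show ?thesis
    by (rule level_step[OF w R])
qed

lemma A_idempotent_flag:
  assumes d: "d = length al" and q: "q \<noteq> 0"
    and distinct: "inj_on (theta q d a b c) {0..d}" and i: "i \<le> d"
  shows "ssum (\<lambda>k. idem_op (A_op q al a b c u v) (theta q d a b c) d k ` Vsp d) {i..d}
           = ssum (Usp d) {i..d}"
proof -
  interpret triangular_flag "A_op q al a b c u v" "theta q d a b c" d
      "level_space d (\<lambda>s. count_list s True)" id
  proof (rule triangular_flag.intro[OF A_op_linear level_space_lincomb level_space_zero
        level_space_antimono _ _ bij_betw_id distinct])
    show "level_space d (\<lambda>s. count_list s True) (Suc d) \<subseteq> {\<lambda>t. 0}"
      by (rule level_space_top) (metis count_le_length)
    show "(\<lambda>t. A_op q al a b c u v w t - theta q d a b c (id m) * w t)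
            \<in> level_space d (\<lambda>s. count_list s True) (Suc m)"
      if "w \<in> level_space d (\<lambda>s. count_list s True) m" for m w
      using A_op_triangular[OF d q that] by simp
  qed
  show ?thesis
    using flag_eq_idem_sum[of i] i by (simp add: level_space_0 ssum_Usp_upper)
qed

lemma As_idempotent_flag:
  assumes d: "d = length al" and q: "q \<noteq> 0"
    and distinct: "inj_on (theta q d a b c) {0..d}" and i: "i \<le> d"
  shows "ssum (\<lambda>k. idem_op (As_op q al a b c u v) (theta q d a b c) d k ` Vsp d) {0..i}
           = ssum (Usp d) {0..i}"
proof -
  interpret triangular_flag "As_op q al a b c u v" "theta q d a b c" d
      "level_space d (\<lambda>s. d - count_list s True)" "\<lambda>m. d - m"
  proof (rule triangular_flag.intro[OF As_op_linear level_space_lincomb level_space_zero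
        level_space_antimono _ _ reflect_bij distinct])
    show "level_space d (\<lambda>s. d - count_list s True) (Suc d) \<subseteq> {\<lambda>t. 0}"
      by (rule level_space_top) simp
    show "(\<lambda>t. As_op q al a b c u v w t - theta q d a b c (d - m) * w t)
            \<in> level_space d (\<lambda>s. d - count_list s True) (Suc m)"
      if "w \<in> level_space d (\<lambda>s. d - count_list s True) m" for m w
      using As_op_triangular[OF d q that] .
  qed
  show ?thesis
    using flag_eq_idem_sum[of "d - i"] i
    by (simp add: level_space_0 reflect_image ssum_Usp_lower)
qed

theorem lemma9p7:
  fixes q a b c as bs cs u v us vs :: "'a::field" and alphas :: "'a list" and d i :: nat
  assumes "alg_closed TYPE('a)"
    and "d = length alphas"
    and "q \<noteq> 0" "b \<noteq> 0" "c \<noteq> 0" "bs \<noteq> 0" "cs \<noteq> 0"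
    and "q^2 \<noteq> 1" "q^2 \<noteq> -1"
    and "inj_on (theta q d a b c) {0..d}"
    and "inj_on (theta q d as bs cs) {0..d}"
    and "\<forall>al\<in>set alphas. al \<noteq> 0"
    and "u * vs = - b * bs * inverse q * (q - inverse q)^2"
    and "v * us = - c * cs * inverse q * (q - inverse q)^2"
    and "i \<le> d"
  shows "ssum (\<lambda>k. idem_op (A_op q alphas a b c u v) (theta q d a b c) d k ` Vsp d) {i..d}
           = ssum (Usp d) {i..d}
         \<and> ssum (\<lambda>k. idem_op (As_op q alphas as bs cs us vs) (theta q d as bs cs) d k ` Vsp d) {0..i}
           = ssum (Usp d) {0..i}"
  using A_idempotent_flag[OF assms(2,3,10,15)] As_idempotent_flag[OF assms(2,3,11,15)] by blast

end
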